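(* (Setting as in the context.) It holds that $$\mathcal F_{p+1}\mathcal F_{p+1}^*+\sigma^{-1}\Sigma_{f_{p+1}}+\begin{pmatrix}\widehat{\mathcal T}_{f_p}&0\\0&\mathcal T_{\theta_p}\end{pmatrix}\succ0\iff \mathcal F\mathcal F^*+\sigma^{-1}\Sigma_f+\mathcal T_f\succ0,$$ $$\mathcal G_{q+1}\mathcal G_{q+1}^*+\sigma^{-1}\Sigma_{g_{q+1}}+\begin{pmatrix}\widehat{\mathcal T}_{g_q}&0\\0&\mathcal T_{\varphi_q}\end{pmatrix}\succ0\iff \mathcal G\mathcal G^*+\sigma^{-1}\Sigma_g+\mathcal T_g\succ0.$$
   Context: Let $p,q\ge1$ be integers, $\mathcal U,\mathcal V,\mathcal X,\mathcal Y_i,\mathcal Z_j$ real finite-dimensional Euclidean spaces; $\mathcal F:\mathcal X\to\mathcal U$, $\mathcal G:\mathcal X\to\mathcal V$, $\mathcal A_i:\mathcal X\to\mathcal Y_i$ ($i=1..p$), $\mathcal B_j:\mathcal X\to\mathcal Z_j$ ($j=1..q$) linear; $\sigma>0$; $\mathcal P_i,\mathcal Q_j$ self-adjoint positive semidefinite on $\mathcal Y_i,\mathcal Z_j$; $\Sigma_f,\Sigma_g$ self-adjoint positive semidefinite on $\mathcal U,\mathcal V$ (in the paper, the operators with $\langle\xi-\tilde\xi,u-\tilde u\rangle\ge\|u-\tilde u\|^2_{\Sigma_f}$ for subgradients of closed proper convex $f$, and likewise for $g$). $\mathcal E_{\theta_i}\succ0$ self-adjoint with $\mathcal E_{\theta_i}\succeq\sigma^{-1}\mathcal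 P_i+\mathcal A_i\mathcal A_i^*$, $\mathcal T_{\theta_i}:=\mathcal E_{\theta_i}-\sigma^{-1}\mathcal P_i-\mathcal A_i\mathcal A_i^*$; $\mathcal E_{\varphi_j}\succ0$ self-adjoint with $\mathcal E_{\varphi_j}\succeq\sigma^{-1}\mathcal Q_j+\mathcal B_j\mathcal B_j^*$, $\mathcal T_{\varphi_j}:=\mathcal E_{\varphi_j}-\sigma^{-1}\mathcal Q_j-\mathcal B_j\mathcal B_j^*$. $\mathcal T_f,\mathcal T_g$ self-adjoint positive semidefinite. $\mathcal F_1:=\mathcal F$, $\mathcal F_{i+1}x:=(\mathcal Fx,\mathcal A_1x,\dots,\mathcal A_ix)$; $\widehat{\mathcal T}_{f_1}:=\mathcal T_f+\mathcal F_1\mathcal A_1^*\mathcal E_{\theta_1}^{-1}\mathcal A_1\mathcal F_1^*$, $\widehat{\mathcal T}_{f_i}:=\mathrm{diag}(\widehat{\mathcal T}_{f_{i-1}},\mathcal T_{\theta_{i-1}})+\mathcal F_i\mathcal A_i^*\mathcal E_{\theta_i}^{-1}\mathcal A_i\mathcal F_i^*$ ($i=2..p$); $\Sigma_{f_1}:=\Sigma_f$, $\Sigma_{f_i}:=\mathrm{diag}(\Sigma_{f_{i-1}},\mathcal P_{i-1})$ ($i=2..p+1$). Analogously $\mathcal G_1:=\mathcal G$, $\mathcal G_{j+1}x:=(\mathcal Gx,\mathcal B_1x,\dots,\mathcal B_jx)$; $\widehat{\mathcal T}_{g_1}:=\mathcal T_g+\mathcal G_1\mathcal B_1^*\mathcal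 E_{\varphi_1}^{-1}\mathcal B_1\mathcal G_1^*$, $\widehat{\mathcal T}_{g_j}:=\mathrm{diag}(\widehat{\mathcal T}_{g_{j-1}},\mathcal T_{\varphi_{j-1}})+\mathcal G_j\mathcal B_j^*\mathcal E_{\varphi_j}^{-1}\mathcal B_j\mathcal G_j^*$ ($j=2..q$); $\Sigma_{g_1}:=\Sigma_g$, $\Sigma_{g_j}:=\mathrm{diag}(\Sigma_{g_{j-1}},\mathcal Q_{j-1})$ ($j=2..q+1$). $\succ0$ means positive definite. *)

theory Defs
  imports "Jordan_Normal_Form.Gauss_Jordan_Elimination"
begin

(* Linear operators between finite-dimensional real Euclidean spaces are
   represented by real matrices (w.r.t. orthonormal bases); the adjoint is
   the transpose. *)

definition psd_mat :: "real mat \<Rightarrow> bool" where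
  "psd_mat M \<longleftrightarrow> dim_row M = dim_col M \<and> transpose_mat M = M \<and>
     (\<forall>v \<in> carrier_vec (dim_row M). 0 \<le> scalar_prod v (M *\<^sub>v v))"

definition pd_mat :: "real mat \<Rightarrow> bool" where
  "pd_mat M \<longleftrightarrow> dim_row M = dim_col M \<and> transpose_mat M = M \<and>
     (\<forall>v \<in> carrier_vec (dim_row M). v \<noteq> 0\<^sub>v (dim_row M) \<longrightarrow> 0 < scalar_prod v (M *\<^sub>v v))"

definition minv :: "real mat \<Rightarrow> real mat" where
  "minv E = the (mat_inverse E)"

definition vstack :: "real mat \<Rightarrow> real mat \<Rightarrow> real mat" where
  "vstack M N = mat (dim_row M + dim_row N) (dim_col M)
     (\<lambda>(i,j). if i < dim_row M then M $$ (i,j) else N $$ (i - dim_row M, j))"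

definition bdiag :: "real mat \<Rightarrow> real mat \<Rightarrow> real mat" where
  "bdiag M N = four_block_mat M (0\<^sub>m (dim_row M) (dim_col N)) (0\<^sub>m (dim_row N) (dim_col M)) N"

(* Fstk F A i = F_i, i >= 1:  F_1 = F, F_{i+1} x = (F x, A_1 x, ..., A_i x).
   The value at 0 is irrelevant. *)
fun Fstk :: "real mat \<Rightarrow> (nat \<Rightarrow> real mat) \<Rightarrow> nat \<Rightarrow> real mat" where
  "Fstk F A 0 = F"
| "Fstk F A (Suc 0) = F"
| "Fstk F A (Suc (Suc i)) = vstack (Fstk F A (Suc i)) (A (Suc i))"

fun Sstk :: "real mat \<Rightarrow> (nat \<Rightarrow> real mat) \<Rightarrow> nat \<Rightarrow> real mat" where
  "Sstk S P 0 = S"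
| "Sstk S P (Suc 0) = S"
| "Sstk S P (Suc (Suc i)) = bdiag (Sstk S P (Suc i)) (P (Suc i))"

definition Tth :: "real \<Rightarrow> (nat \<Rightarrow> real mat) \<Rightarrow> (nat \<Rightarrow> real mat) \<Rightarrow> (nat \<Rightarrow> real mat) \<Rightarrow> nat \<Rightarrow> real mat" where
  "Tth \<sigma> P A E i = E i - smult_mat (1 / \<sigma>) (P i) - A i * transpose_mat (A i)"

definition corr :: "real mat \<Rightarrow> (nat \<Rightarrow> real mat) \<Rightarrow> (nat \<Rightarrow> real mat) \<Rightarrow> nat \<Rightarrow> real mat" where
  "corr F A E i = Fstk F A i * transpose_mat (A i) * minv (E i) * A i * transpose_mat (Fstk F A i)"

fun hatT :: "real \<Rightarrow> real mat \<Rightarrow> real mat \<Rightarrow> (nat \<Rightarrow> real mat) \<Rightarrow> (nat \<Rightarrow> real mat) \<Rightarrow> (nat \<Rightarrow> real mat) \<Rightarrow> nat \<Rightarrow> real mat" where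
  "hatT \<sigma> T F A P E 0 = T"
| "hatT \<sigma> T F A P E (Suc 0) = T + corr F A E (Suc 0)"
| "hatT \<sigma> T F A P E (Suc (Suc i)) =
     bdiag (hatT \<sigma> T F A P E (Suc i)) (Tth \<sigma> P A E (Suc i)) + corr F A E (Suc (Suc i))"

end

theory Submission
  imports Defs "Jordan_Normal_Form.Determinant"
begin

text \<open>Appending the block row A_i to F_i and absorbing the correction term
  F_i A_i^* E_i^{-1} A_i F_i^* turns the matrix of stage i+1 into a block matrix
  [[N + C^* E_i^{-1} C, C^*], [C, E_i]] with C = A_i F_i^*, whose Schur complement N is the
  matrix of stage i. Completing the square in its quadratic form shows, since E_i is positive
  definite, that such a block matrix is positive definite exactly when N is; induction on i
  descends to F F^* + sigma^{-1} Sigma_f + T_f.\<close>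

lemma pd_mat_quadratic_nonneg:
  assumes "pd_mat E" "E \<in> carrier_mat m m" "u \<in> carrier_vec m"
  shows "0 \<le> u \<bullet> (E *\<^sub>v u)"
proof (cases "u = 0\<^sub>v m")
  case True thus ?thesis using assms by simp
next
  case False thus ?thesis using assms unfolding pd_mat_def by (auto intro: less_imp_le)
qed

lemma pd_mat_det_nonzero:
  assumes E: "E \<in> carrier_mat m m" and "pd_mat E"
  shows "det E \<noteq> 0"
proof
  assume "det E = 0"
  then obtain v where v: "v \<in> carrier_vec m" "v \<noteq> 0\<^sub>v m" "E *\<^sub>v v = 0\<^sub>v m"
    using det_0_iff_vec_prod_zero[OF E] by blast
  hence "0 < v \<bullet> (E *\<^sub>v v)" using assms unfolding pd_mat_def by auto
  thus False using v by simp
qed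

lemma pd_mat_minv:
  assumes E: "E \<in> carrier_mat m m" and Epd: "pd_mat E"
  shows "minv E \<in> carrier_mat m m" "E * minv E = 1\<^sub>m m" "transpose_mat (minv E) = minv E"
proof -
  have "E \<in> Units (ring_mat TYPE(real) m m)"
    by (rule det_non_zero_imp_unit[OF E pd_mat_det_nonzero[OF assms]])
  then obtain X where X: "mat_inverse E = Some X"
    using mat_inverse(1)[OF E, of m] by (cases "mat_inverse E") auto
  have EX: "E * X = 1\<^sub>m m" and Xc: "X \<in> carrier_mat m m"
    using mat_inverse(2)[OF E X] by auto
  have minv: "minv E = X" unfolding minv_def X by simp
  show "minv E \<in> carrier_mat m m" "E * minv E = 1\<^sub>m m" using minv EX Xc by auto
  have Es: "transpose_mat E = E" using Epd unfolding pd_mat_def by auto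
  have XtE: "transpose_mat X * E = 1\<^sub>m m"
    using transpose_mult[OF E Xc] EX Es by simp
  have "transpose_mat X = (transpose_mat X * E) * X"
    using Xc E by (simp add: assoc_mult_mat[of _ m m _ m _ m] EX)
  also have "\<dots> = X" using XtE Xc by simp
  finally show "transpose_mat (minv E) = minv E" using minv by simp
qed

lemma four_block_schur_quadratic_form:
  fixes N C X E :: "real mat"
  assumes N: "N \<in> carrier_mat n n" and C: "C \<in> carrier_mat m n"
    and X: "X \<in> carrier_mat m m" and E: "E \<in> carrier_mat m m"
    and EX: "E * X = 1\<^sub>m m" and Es: "transpose_mat E = E"
    and w: "w \<in> carrier_vec n" and y: "y \<in> carrier_vec m"
  shows "(w @\<^sub>v y) \<bullet> (four_block_mat (N + transpose_mat C * X * C) (transpose_mat C) C E *\<^sub>v (w @\<^sub>v y))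
       = w \<bullet> (N *\<^sub>v w) + (y + X *\<^sub>v (C *\<^sub>v w)) \<bullet> (E *\<^sub>v (y + X *\<^sub>v (C *\<^sub>v w)))"
proof -
  define z where "z = C *\<^sub>v w"
  define x where "x = X *\<^sub>v z"
  have z: "z \<in> carrier_vec m" and x: "x \<in> carrier_vec m" using z_def x_def C X w by auto
  have Ct: "transpose_mat C \<in> carrier_mat n m" using C by auto
  have Ex: "E *\<^sub>v x = z" using x_def E X z EX by (simp flip: assoc_mult_mat_vec)
  have "(transpose_mat C * X * C) *\<^sub>v w = (transpose_mat C * X) *\<^sub>v z"
    unfolding z_def by (rule assoc_mult_mat_vec) (use Ct X C w in auto)
  also have "\<dots> = transpose_mat C *\<^sub>v x" unfolding x_def by (rule assoc_mult_mat_vec[OF Ct X z])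
  finally have Bw: "(transpose_mat C * X * C) *\<^sub>v w = transpose_mat C *\<^sub>v x" .
  have "four_block_mat (N + transpose_mat C * X * C) (transpose_mat C) C E *\<^sub>v (w @\<^sub>v y)
     = ((N + transpose_mat C * X * C) *\<^sub>v w + transpose_mat C *\<^sub>v y) @\<^sub>v (z + E *\<^sub>v y)"
    unfolding z_def by (rule four_block_mat_mult_vec[OF _ Ct C E w y]) (use N C X in auto)
  also have "(N + transpose_mat C * X * C) *\<^sub>v w = N *\<^sub>v w + transpose_mat C *\<^sub>v x"
    using N C X w Bw by (simp add: add_mult_distrib_mat_vec)
  finally have K: "four_block_mat (N + transpose_mat C * X * C) (transpose_mat C) C E *\<^sub>v (w @\<^sub>v y)
     = (N *\<^sub>v w + transpose_mat C *\<^sub>v x + transpose_mat C *\<^sub>v y) @\<^sub>v (z + E *\<^sub>v y)" .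
  have Ctx: "w \<bullet> (transpose_mat C *\<^sub>v x) = x \<bullet> z"
    using comm_scalar_prod[of w n] transpose_vec_mult_scalar[OF C w x] w Ct x
    unfolding z_def by auto
  have Cty: "w \<bullet> (transpose_mat C *\<^sub>v y) = y \<bullet> z"
    using comm_scalar_prod[of w n] transpose_vec_mult_scalar[OF C w y] w Ct y
    unfolding z_def by auto
  have xEy: "x \<bullet> (E *\<^sub>v y) = y \<bullet> z"
    using transpose_vec_mult_scalar[OF E y x] Es Ex comm_scalar_prod[OF z y] by simp
  have "(w @\<^sub>v y) \<bullet> ((N *\<^sub>v w + transpose_mat C *\<^sub>v x + transpose_mat C *\<^sub>v y) @\<^sub>v (z + E *\<^sub>v y))
     = w \<bullet> (N *\<^sub>v w + transpose_mat C *\<^sub>v x + transpose_mat C *\<^sub>v y) + y \<bullet> (z + E *\<^sub>v y)"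
    by (rule scalar_prod_append[of _ n _ m]) (use w y N Ct x z E in auto)
  also have "\<dots> = w \<bullet> (N *\<^sub>v w) + x \<bullet> z + y \<bullet> z + y \<bullet> z + y \<bullet> (E *\<^sub>v y)"
    using w y N Ct x z E Ctx Cty
    by (simp add: scalar_prod_add_distrib[of _ n] scalar_prod_add_distrib[of _ m])
  also have "\<dots> = w \<bullet> (N *\<^sub>v w) + (y + x) \<bullet> (E *\<^sub>v (y + x))"
    using E y x z Ex xEy comm_scalar_prod[OF x z]
    by (simp add: mult_add_distrib_mat_vec scalar_prod_add_distrib[of _ m] add_scalar_prod_distrib[of _ m])
  finally show ?thesis using K unfolding x_def z_def by simp
qed

lemma zero_vec_append: "0\<^sub>v (n + m) = (0\<^sub>v n :: 'a :: zero vec) @\<^sub>v 0\<^sub>v m"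
  by (rule eq_vecI) auto

lemma four_block_schur_symmetric_iff:
  fixes N C X E :: "real mat"
  assumes N: "N \<in> carrier_mat n n" and C: "C \<in> carrier_mat m n"
    and X: "X \<in> carrier_mat m m" and E: "E \<in> carrier_mat m m"
    and Xs: "transpose_mat X = X" and Es: "transpose_mat E = E"
  shows "transpose_mat (four_block_mat (N + transpose_mat C * X * C) (transpose_mat C) C E)
      = four_block_mat (N + transpose_mat C * X * C) (transpose_mat C) C E
    \<longleftrightarrow> transpose_mat N = N"
    (is "transpose_mat ?K = ?K \<longleftrightarrow> _")
proof -
  let ?B = "transpose_mat C * X * C"
  have Ct: "transpose_mat C \<in> carrier_mat n m" and B: "?B \<in> carrier_mat n n" using C X by auto
  have "transpose_mat ?B = transpose_mat C * transpose_mat (transpose_mat C * X)"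
    using transpose_mult[of "transpose_mat C * X" n m C n] C X by auto
  also have "transpose_mat (transpose_mat C * X) = X * C" using transpose_mult[OF Ct X] Xs by simp
  finally have Bs: "transpose_mat ?B = ?B" using assoc_mult_mat[OF Ct X C] by simp
  have Kt: "transpose_mat ?K = four_block_mat (transpose_mat N + ?B) (transpose_mat C) C E"
    using N B Ct C E Es Bs
    by (simp add: transpose_four_block_mat[of _ n n _ m _ m] transpose_add[of _ n n])
  show ?thesis
  proof
    assume KK: "transpose_mat ?K = ?K"
    show "transpose_mat N = N"
    proof (rule eq_matI)
      fix i j assume ij: "i < dim_row N" "j < dim_col N"
      have "transpose_mat ?K $$ (i, j) = ?K $$ (i, j)" using KK by simp
      thus "transpose_mat N $$ (i, j) = N $$ (i, j)" unfolding Kt using ij N B Ct C E by simp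
    qed (use N in auto)
  qed (simp add: Kt)
qed

lemma four_block_schur_positive_iff:
  fixes N C X E :: "real mat"
  assumes N: "N \<in> carrier_mat n n" and C: "C \<in> carrier_mat m n"
    and X: "X \<in> carrier_mat m m" and E: "E \<in> carrier_mat m m"
    and EX: "E * X = 1\<^sub>m m" and Epd: "pd_mat E"
  shows "(\<forall>v \<in> carrier_vec (n + m). v \<noteq> 0\<^sub>v (n + m) \<longrightarrow>
        0 < v \<bullet> (four_block_mat (N + transpose_mat C * X * C) (transpose_mat C) C E *\<^sub>v v))
     \<longleftrightarrow> (\<forall>w \<in> carrier_vec n. w \<noteq> 0\<^sub>v n \<longrightarrow> 0 < w \<bullet> (N *\<^sub>v w))"
    (is "(\<forall>v \<in> _. _ \<longrightarrow> 0 < v \<bullet> (?K *\<^sub>v v)) \<longleftrightarrow> _")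
proof -
  have Es: "transpose_mat E = E" using Epd unfolding pd_mat_def by auto
  have Q: "(w @\<^sub>v y) \<bullet> (?K *\<^sub>v (w @\<^sub>v y))
       = w \<bullet> (N *\<^sub>v w) + (y + X *\<^sub>v (C *\<^sub>v w)) \<bullet> (E *\<^sub>v (y + X *\<^sub>v (C *\<^sub>v w)))"
    if "w \<in> carrier_vec n" "y \<in> carrier_vec m" for w y
    by (rule four_block_schur_quadratic_form[OF N C X E EX Es that])
  show ?thesis
  proof (intro iffI ballI impI)
    fix w :: "real vec" assume Kpos: "\<forall>v \<in> carrier_vec (n + m). v \<noteq> 0\<^sub>v (n + m) \<longrightarrow> 0 < v \<bullet> (?K *\<^sub>v v)"
      and w: "w \<in> carrier_vec n" and w0: "w \<noteq> 0\<^sub>v n"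
    define y where "y = - (X *\<^sub>v (C *\<^sub>v w))"
    have y: "y \<in> carrier_vec m" using y_def X C w by auto
    have "y + X *\<^sub>v (C *\<^sub>v w) = 0\<^sub>v m" unfolding y_def using X C w by (intro eq_vecI) auto
    moreover have "w @\<^sub>v y \<noteq> 0\<^sub>v (n + m)" unfolding zero_vec_append using w w0 y by simp
    ultimately show "0 < w \<bullet> (N *\<^sub>v w)" using Kpos Q[OF w y] w y E by auto
  next
    fix v :: "real vec" assume Npos: "\<forall>w \<in> carrier_vec n. w \<noteq> 0\<^sub>v n \<longrightarrow> 0 < w \<bullet> (N *\<^sub>v w)"
      and v: "v \<in> carrier_vec (n + m)" and v0: "v \<noteq> 0\<^sub>v (n + m)"
    define w y where "w = vec_first v n" and "y = vec_last v m"
    have w: "w \<in> carrier_vec n" and y: "y \<in> carrier_vec m" and vwy: "v = w @\<^sub>v y"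
      using v unfolding w_def y_def by auto
    let ?u = "y + X *\<^sub>v (C *\<^sub>v w)"
    have u: "?u \<in> carrier_vec m" using y X C w by auto
    show "0 < v \<bullet> (?K *\<^sub>v v)"
    proof (cases "w = 0\<^sub>v n")
      case False
      hence "0 < w \<bullet> (N *\<^sub>v w)" using Npos w by blast
      thus ?thesis unfolding vwy Q[OF w y] using pd_mat_quadratic_nonneg[OF Epd E u] by simp
    next
      case True
      have "y \<noteq> 0\<^sub>v m" using v0 True unfolding vwy zero_vec_append by auto
      moreover have "C *\<^sub>v w = 0\<^sub>v m" using True C by (intro eq_vecI) auto
      hence "?u = y" using X y by (intro eq_vecI) auto
      ultimately have "0 < ?u \<bullet> (E *\<^sub>v ?u)" using Epd E y unfolding pd_mat_def by auto
      thus ?thesis unfolding vwy Q[OF w y] using True N by simp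
    qed
  qed
qed

lemma pd_mat_four_block_schur_iff:
  fixes N C X E :: "real mat"
  assumes N: "N \<in> carrier_mat n n" and C: "C \<in> carrier_mat m n"
    and X: "X \<in> carrier_mat m m" and E: "E \<in> carrier_mat m m"
    and EX: "E * X = 1\<^sub>m m" and Xs: "transpose_mat X = X" and Epd: "pd_mat E"
  shows "pd_mat (four_block_mat (N + transpose_mat C * X * C) (transpose_mat C) C E) \<longleftrightarrow> pd_mat N"
proof -
  let ?K = "four_block_mat (N + transpose_mat C * X * C) (transpose_mat C) C E"
  have "transpose_mat E = E" using Epd unfolding pd_mat_def by auto
  note sym = four_block_schur_symmetric_iff[OF N C X E Xs this]
  note pos = four_block_schur_positive_iff[OF N C X E EX Epd]
  have "?K \<in> carrier_mat (n + m) (n + m)" using N C X E by auto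
  hence "dim_row ?K = n + m" "dim_col ?K = n + m" "dim_row N = n" "dim_col N = n" using N by auto
  thus ?thesis using sym pos unfolding pd_mat_def by metis
qed

lemma vstack_carrier:
  "M \<in> carrier_mat a k \<Longrightarrow> N \<in> carrier_mat b k \<Longrightarrow> vstack M N \<in> carrier_mat (a + b) k"
  unfolding vstack_def by auto

lemma bdiag_carrier:
  "M \<in> carrier_mat a a \<Longrightarrow> N \<in> carrier_mat b b \<Longrightarrow> bdiag M N \<in> carrier_mat (a + b) (a + b)"
  unfolding bdiag_def by auto

lemma vstack_eq_four_block:
  assumes "M \<in> carrier_mat a k" "N \<in> carrier_mat b k"
  shows "vstack M N = four_block_mat M (0\<^sub>m a 0) N (0\<^sub>m b 0)"
  using assms unfolding vstack_def by (intro eq_matI) auto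

lemma vstack_mult_transpose:
  fixes M N :: "real mat"
  assumes M: "M \<in> carrier_mat a k" and N: "N \<in> carrier_mat b k"
  shows "vstack M N * transpose_mat (vstack M N) =
     four_block_mat (M * transpose_mat M) (M * transpose_mat N) (N * transpose_mat M) (N * transpose_mat N)"
proof -
  have V: "vstack M N = four_block_mat M (0\<^sub>m a 0) N (0\<^sub>m b 0)"
    by (rule vstack_eq_four_block[OF M N])
  have Vt: "transpose_mat (vstack M N) =
      four_block_mat (transpose_mat M) (transpose_mat N) (0\<^sub>m 0 a) (0\<^sub>m 0 b)"
    unfolding V using M N by (simp add: transpose_four_block_mat[of _ a k _ 0 _ b])
  have "vstack M N * transpose_mat (vstack M N) =
     four_block_mat (M * transpose_mat M + 0\<^sub>m a 0 * 0\<^sub>m 0 a) (M * transpose_mat N + 0\<^sub>m a 0 * 0\<^sub>m 0 b)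
       (N * transpose_mat M + 0\<^sub>m b 0 * 0\<^sub>m 0 a) (N * transpose_mat N + 0\<^sub>m b 0 * 0\<^sub>m 0 b)"
    unfolding Vt unfolding V by (rule mult_four_block_mat) (use M N in auto)
  also have "\<dots> = four_block_mat (M * transpose_mat M) (M * transpose_mat N)
      (N * transpose_mat M) (N * transpose_mat N)"
    using M N by (intro cong_four_block_mat; intro eq_matI; simp)
  finally show ?thesis .
qed

lemma stack_step_eq_four_block:
  fixes F A S P D E X :: "real mat"
  assumes F: "F \<in> carrier_mat n k" and A: "A \<in> carrier_mat m k"
    and S: "S \<in> carrier_mat n n" and P: "P \<in> carrier_mat m m"
    and D: "D \<in> carrier_mat n n" and E: "E \<in> carrier_mat m m" and X: "X \<in> carrier_mat m m"
  shows "vstack F A * transpose_mat (vstack F A) + smult_mat c (bdiag S P)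
     + bdiag (D + F * transpose_mat A * X * A * transpose_mat F) (E - smult_mat c P - A * transpose_mat A)
   = four_block_mat ((F * transpose_mat F + smult_mat c S + D)
        + transpose_mat (A * transpose_mat F) * X * (A * transpose_mat F))
      (transpose_mat (A * transpose_mat F)) (A * transpose_mat F) E"
proof -
  have Ft: "transpose_mat F \<in> carrier_mat k n" and At: "transpose_mat A \<in> carrier_mat k m"
    using F A by auto
  have AFt: "transpose_mat (A * transpose_mat F) = F * transpose_mat A"
    using transpose_mult[OF A Ft] by simp
  have "F * transpose_mat A * X * A * transpose_mat F
     = transpose_mat (A * transpose_mat F) * X * (A * transpose_mat F)"
    unfolding AFt using F A X Ft At by (subst assoc_mult_mat[of _ n m _ k _ n]) auto
  thus ?thesis unfolding vstack_mult_transpose[OF F A] bdiag_def AFt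
    by (intro eq_matI) (use F A S P D E X Ft At in auto)
qed

lemma pd_mat_stack_step_iff:
  fixes F A S P D E :: "real mat"
  assumes F: "F \<in> carrier_mat n k" and A: "A \<in> carrier_mat m k"
    and S: "S \<in> carrier_mat n n" and P: "P \<in> carrier_mat m m"
    and D: "D \<in> carrier_mat n n" and E: "E \<in> carrier_mat m m" and Epd: "pd_mat E"
  shows "pd_mat (vstack F A * transpose_mat (vstack F A) + smult_mat c (bdiag S P)
     + bdiag (D + F * transpose_mat A * minv E * A * transpose_mat F) (E - smult_mat c P - A * transpose_mat A))
     \<longleftrightarrow> pd_mat (F * transpose_mat F + smult_mat c S + D)"
proof -
  note Einv = pd_mat_minv[OF E Epd]
  have "A * transpose_mat F \<in> carrier_mat m n" "F * transpose_mat F + smult_mat c S + D \<in> carrier_mat n n"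
    using F A S D by auto
  thus ?thesis unfolding stack_step_eq_four_block[OF F A S P D E Einv(1)]
    using pd_mat_four_block_schur_iff[OF _ _ Einv(1) E Einv(2) Einv(3) Epd] by blast
qed

lemma Tth_carrier:
  "A i \<in> carrier_mat m k \<Longrightarrow> P i \<in> carrier_mat m m \<Longrightarrow> E i \<in> carrier_mat m m
   \<Longrightarrow> Tth \<sigma> P A E i \<in> carrier_mat m m"
  unfolding Tth_def by auto

lemma hatT_Suc:
  "hatT \<sigma> T F A P E (Suc j) =
     (case j of 0 \<Rightarrow> T | Suc i \<Rightarrow> bdiag (hatT \<sigma> T F A P E (Suc i)) (Tth \<sigma> P A E (Suc i)))
     + corr F A E (Suc j)"
  by (cases j) simp_all

context
  fixes F S T :: "real mat" and A P E :: "nat \<Rightarrow> real mat"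
    and nu nx p :: nat and ny :: "nat \<Rightarrow> nat"
  assumes F: "F \<in> carrier_mat nu nx" and S: "S \<in> carrier_mat nu nu" and T: "T \<in> carrier_mat nu nu"
    and A: "\<And>i. i \<in> {1..p} \<Longrightarrow> A i \<in> carrier_mat (ny i) nx"
    and P: "\<And>i. i \<in> {1..p} \<Longrightarrow> P i \<in> carrier_mat (ny i) (ny i)"
    and E: "\<And>i. i \<in> {1..p} \<Longrightarrow> E i \<in> carrier_mat (ny i) (ny i)"
    and Epd: "\<And>i. i \<in> {1..p} \<Longrightarrow> pd_mat (E i)"
begin

lemma Fstk_carrier: "j \<le> p \<Longrightarrow> Fstk F A (Suc j) \<in> carrier_mat (nu + (\<Sum>i = 1..j. ny i)) nx"
proof (induction j)
  case 0 thus ?case using F by simp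
next
  case (Suc j)
  have "Fstk F A (Suc j) \<in> carrier_mat (nu + (\<Sum>i = 1..j. ny i)) nx" using Suc by simp
  from vstack_carrier[OF this A[of "Suc j"]] Suc.prems show ?case by (simp add: add.assoc)
qed

lemma Sstk_carrier:
  "j \<le> p \<Longrightarrow> Sstk S P (Suc j) \<in> carrier_mat (nu + (\<Sum>i = 1..j. ny i)) (nu + (\<Sum>i = 1..j. ny i))"
proof (induction j)
  case 0 thus ?case using S by simp
next
  case (Suc j)
  have "Sstk S P (Suc j) \<in> carrier_mat (nu + (\<Sum>i = 1..j. ny i)) (nu + (\<Sum>i = 1..j. ny i))"
    using Suc by simp
  from bdiag_carrier[OF this P[of "Suc j"]] Suc.prems show ?case by (simp add: add.assoc)
qed

lemma corr_carrier:
  "Suc j \<le> p \<Longrightarrow> corr F A E (Suc j) \<in> carrier_mat (nu + (\<Sum>i = 1..j. ny i)) (nu + (\<Sum>i = 1..j. ny i))"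
  using Fstk_carrier[of j] A[of "Suc j"] pd_mat_minv(1)[OF E Epd, of "Suc j"]
  unfolding corr_def by auto

lemma bdiag_Tth_carrier:
  assumes "M \<in> carrier_mat (nu + (\<Sum>i = 1..j. ny i)) (nu + (\<Sum>i = 1..j. ny i))" and "Suc j \<le> p"
  shows "bdiag M (Tth \<sigma> P A E (Suc j))
      \<in> carrier_mat (nu + (\<Sum>i = 1..Suc j. ny i)) (nu + (\<Sum>i = 1..Suc j. ny i))"
proof -
  have "Tth \<sigma> P A E (Suc j) \<in> carrier_mat (ny (Suc j)) (ny (Suc j))"
    using assms(2) Tth_carrier[of A "Suc j" _ _ P E, OF A P E] by simp
  from bdiag_carrier[OF assms(1) this] show ?thesis by (simp add: add.assoc)
qed

lemma hatT_carrier: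
  "Suc j \<le> p \<Longrightarrow> hatT \<sigma> T F A P E (Suc j) \<in> carrier_mat (nu + (\<Sum>i = 1..j. ny i)) (nu + (\<Sum>i = 1..j. ny i))"
proof (induction j)
  case 0 thus ?case using T corr_carrier[of 0] by simp
next
  case (Suc j)
  thus ?case using bdiag_Tth_carrier corr_carrier[of "Suc j"] by simp
qed

lemma pd_mat_hatT_step_iff:
  assumes j: "Suc j \<le> p"
  shows "pd_mat (Fstk F A (Suc (Suc j)) * transpose_mat (Fstk F A (Suc (Suc j)))
        + smult_mat (1 / \<sigma>) (Sstk S P (Suc (Suc j)))
        + bdiag (hatT \<sigma> T F A P E (Suc j)) (Tth \<sigma> P A E (Suc j)))
    \<longleftrightarrow> pd_mat (Fstk F A (Suc j) * transpose_mat (Fstk F A (Suc j))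
        + smult_mat (1 / \<sigma>) (Sstk S P (Suc j))
        + (case j of 0 \<Rightarrow> T | Suc i \<Rightarrow> bdiag (hatT \<sigma> T F A P E (Suc i)) (Tth \<sigma> P A E (Suc i))))"
proof -
  let ?D = "case j of 0 \<Rightarrow> T | Suc i \<Rightarrow> bdiag (hatT \<sigma> T F A P E (Suc i)) (Tth \<sigma> P A E (Suc i))"
  have D: "?D \<in> carrier_mat (nu + (\<Sum>i = 1..j. ny i)) (nu + (\<Sum>i = 1..j. ny i))"
    using T j hatT_carrier bdiag_Tth_carrier by (cases j) auto
  from j have "Suc j \<in> {1..p}" by simp
  note step = pd_mat_stack_step_iff[OF Fstk_carrier A[OF this] Sstk_carrier P[OF this] D E[OF this] Epd[OF this]]
  show ?thesis
    unfolding Fstk.simps(3) Sstk.simps(3) hatT_Suc[of \<sigma> T F A P E j]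
      corr_def[of F A E "Suc j"] Tth_def[of \<sigma> P A E "Suc j"]
    using step j by simp
qed

lemma pd_mat_hatT_iff:
  assumes "1 \<le> k" "k \<le> p"
  shows "pd_mat (Fstk F A (k + 1) * transpose_mat (Fstk F A (k + 1))
        + smult_mat (1 / \<sigma>) (Sstk S P (k + 1))
        + bdiag (hatT \<sigma> T F A P E k) (Tth \<sigma> P A E k))
    \<longleftrightarrow> pd_mat (F * transpose_mat F + smult_mat (1 / \<sigma>) S + T)"
proof -
  obtain j where k: "k = Suc j" using assms(1) by (cases k) auto
  have "Suc j \<le> p \<Longrightarrow> pd_mat (Fstk F A (Suc (Suc j)) * transpose_mat (Fstk F A (Suc (Suc j)))
        + smult_mat (1 / \<sigma>) (Sstk S P (Suc (Suc j)))
        + bdiag (hatT \<sigma> T F A P E (Suc j)) (Tth \<sigma> P A E (Suc j)))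
    \<longleftrightarrow> pd_mat (F * transpose_mat F + smult_mat (1 / \<sigma>) S + T)"
  proof (induction j)
    case 0 thus ?case using pd_mat_hatT_step_iff[of 0] by simp
  next
    case (Suc j) thus ?case using pd_mat_hatT_step_iff[of "Suc j"] by simp
  qed
  thus ?thesis using assms(2) k by simp
qed

end

theorem proposition3p3:
  fixes p q nx nu nv :: nat and ny nz :: "nat \<Rightarrow> nat" and \<sigma> :: real
    and F G Tf Tg Sf Sg :: "real mat"
    and A B P Q Eth Eph :: "nat \<Rightarrow> real mat"
  assumes "p \<ge> 1" and "q \<ge> 1" and "\<sigma> > 0"
    and "F \<in> carrier_mat nu nx" and "G \<in> carrier_mat nv nx"
    and "\<And>i. i \<in> {1..p} \<Longrightarrow> A i \<in> carrier_mat (ny i) nx"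
    and "\<And>j. j \<in> {1..q} \<Longrightarrow> B j \<in> carrier_mat (nz j) nx"
    and "\<And>i. i \<in> {1..p} \<Longrightarrow> P i \<in> carrier_mat (ny i) (ny i) \<and> psd_mat (P i)"
    and "\<And>j. j \<in> {1..q} \<Longrightarrow> Q j \<in> carrier_mat (nz j) (nz j) \<and> psd_mat (Q j)"
    and "Sf \<in> carrier_mat nu nu" and "psd_mat Sf"
    and "Sg \<in> carrier_mat nv nv" and "psd_mat Sg"
    and "\<And>i. i \<in> {1..p} \<Longrightarrow> Eth i \<in> carrier_mat (ny i) (ny i) \<and> pd_mat (Eth i)
                            \<and> psd_mat (Tth \<sigma> P A Eth i)"
    and "\<And>j. j \<in> {1..q} \<Longrightarrow> Eph j \<in> carrier_mat (nz j) (nz j) \<and> pd_mat (Eph j)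
                            \<and> psd_mat (Tth \<sigma> Q B Eph j)"
    and "Tf \<in> carrier_mat nu nu" and "psd_mat Tf"
    and "Tg \<in> carrier_mat nv nv" and "psd_mat Tg"
  shows "(pd_mat (Fstk F A (p + 1) * transpose_mat (Fstk F A (p + 1))
                  + smult_mat (1 / \<sigma>) (Sstk Sf P (p + 1))
                  + bdiag (hatT \<sigma> Tf F A P Eth p) (Tth \<sigma> P A Eth p))
           \<longleftrightarrow> pd_mat (F * transpose_mat F + smult_mat (1 / \<sigma>) Sf + Tf))
       \<and> (pd_mat (Fstk G B (q + 1) * transpose_mat (Fstk G B (q + 1))
                  + smult_mat (1 / \<sigma>) (Sstk Sg Q (q + 1))
                  + bdiag (hatT \<sigma> Tg G B Q Eph q) (Tth \<sigma> Q B Eph q))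
           \<longleftrightarrow> pd_mat (G * transpose_mat G + smult_mat (1 / \<sigma>) Sg + Tg))"
proof (intro conjI)
  show "pd_mat (Fstk F A (p + 1) * transpose_mat (Fstk F A (p + 1))
                  + smult_mat (1 / \<sigma>) (Sstk Sf P (p + 1))
                  + bdiag (hatT \<sigma> Tf F A P Eth p) (Tth \<sigma> P A Eth p))
           \<longleftrightarrow> pd_mat (F * transpose_mat F + smult_mat (1 / \<sigma>) Sf + Tf)"
    by (rule pd_mat_hatT_iff[where nu = nu and nx = nx and ny = ny and p = p]) (use assms in auto)
  show "pd_mat (Fstk G B (q + 1) * transpose_mat (Fstk G B (q + 1))
                  + smult_mat (1 / \<sigma>) (Sstk Sg Q (q + 1))
                  + bdiag (hatT \<sigma> Tg G B Q Eph q) (Tth \<sigma> Q B Eph q))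
           \<longleftrightarrow> pd_mat (G * transpose_mat G + smult_mat (1 / \<sigma>) Sg + Tg)"
    by (rule pd_mat_hatT_iff[where nu = nv and nx = nx and ny = nz and p = q]) (use assms in auto)
qed

end
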